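(* Under the standing setup, define $$Y^{1+}_{MOB}=\frac{\mathbb E[\min\{Y_N-\underline Y(1-X_N),\,\overline Y X_N\}]}{\mathbb E[X]},\qquad Y^{0-}_{MOB}=\frac{\mathbb E[\max\{Y_N-\overline Y X_N,\,\underline Y(1-X_N)\}]}{1-\mathbb E[X]},$$ $$Y^{1-}_{MOB}=\frac{\mathbb E[\max\{Y_N-\overline Y(1-X_N),\,\underline Y X_N\}]}{\mathbb E[X]},\qquad Y^{0+}_{MOB}=\frac{\mathbb E[\min\{Y_N-\underline Y X_N,\,\overline Y(1-X_N)\}]}{1-\mathbb E[X]}.$$ Then $Y^1\in[Y^{1-}_{MOB},Y^{1+}_{MOB}]$ and $Y^0\in[Y^{0-}_{MOB},Y^{0+}_{MOB}]$, and these bounds are sharp (absent additional information).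
   Context: Let $(X,Y,N)$ be a random triple with $X\in\{0,1\}$, $Y$ real-valued, $N$ taking values in a finite set $\mathcal N$. Write $p_n=\Pr(N=n)$, $X_n=\mathbb E[X\mid N=n]$, $Y_n=\mathbb E[Y\mid N=n]$, and $X_N=\mathbb E[X\mid N]$, $Y_N=\mathbb E[Y\mid N]$; expectations of functions of $(X_N,Y_N)$ are sums over $n$ weighted by $p_n$. Assume some $n$ has $p_n>0$ and $X_n\in(0,1)$. Fix reals $\underline Y\le\overline Y$ and assume $\mathbb E[Y\mid X=x,N=n]\in[\underline Y,\overline Y]$ whenever $\Pr(X=x,N=n)>0$ (standing bound). $Y^x=\mathbb E[Y\mid X=x]$. The observed data are $(p_n,X_n,Y_n)_{n\in\mathcal N}$. Sharpness: an interval is a sharp bound for a parameter if the parameter lies in it for every joint distribution satisfying the standing assumptions, and for every value $v$ in the interval there is a joint distribution of $(X,Y,N)$ with the same observed $(p_n,X_n,Y_n)_n$, satisfying the standing bound, for which the parameter equals $v$. *)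

theory Defs
  imports "HOL-Probability.Probability"
begin

definition joint_space :: "(bool \<times> real \<times> 'n) measure" where
  "joint_space = count_space UNIV \<Otimes>\<^sub>M (borel \<Otimes>\<^sub>M count_space UNIV)"

definition Xv :: "bool \<times> real \<times> 'n \<Rightarrow> bool" where "Xv w = fst w"
definition Yv :: "bool \<times> real \<times> 'n \<Rightarrow> real" where "Yv w = fst (snd w)"
definition Nv :: "bool \<times> real \<times> 'n \<Rightarrow> 'n" where "Nv w = snd (snd w)"

definition pN :: "(bool \<times> real \<times> 'n) measure \<Rightarrow> 'n \<Rightarrow> real" where
  "pN D n = measure D {w \<in> space D. Nv w = n}"

definition XN :: "(bool \<times> real \<times> 'n) measure \<Rightarrow> 'n \<Rightarrow> real" where
  "XN D n = measure D {w \<in> space D. Xv w \<and> Nv w = n} / pN D n"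

definition YN :: "(bool \<times> real \<times> 'n) measure \<Rightarrow> 'n \<Rightarrow> real" where
  "YN D n = (\<integral>w. Yv w * indicator {w. Nv w = n} w \<partial>D) / pN D n"

definition pXN :: "(bool \<times> real \<times> 'n) measure \<Rightarrow> bool \<Rightarrow> 'n \<Rightarrow> real" where
  "pXN D x n = measure D {w \<in> space D. Xv w = x \<and> Nv w = n}"

definition cmean :: "(bool \<times> real \<times> 'n) measure \<Rightarrow> bool \<Rightarrow> 'n \<Rightarrow> real" where
  "cmean D x n = (\<integral>w. Yv w * indicator {w. Xv w = x \<and> Nv w = n} w \<partial>D) / pXN D x n"

definition Ypar :: "(bool \<times> real \<times> 'n) measure \<Rightarrow> bool \<Rightarrow> real" where
  "Ypar D x = (\<integral>w. Yv w * indicator {w. Xv w = x} w \<partial>D)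
              / measure D {w \<in> space D. Xv w = x}"

definition joint_dist :: "real \<Rightarrow> real \<Rightarrow> (bool \<times> real \<times> 'n) measure \<Rightarrow> bool" where
  "joint_dist lo hi D \<longleftrightarrow>
     prob_space D \<and> sets D = sets joint_space \<and> integrable D Yv \<and>
     (\<forall>x n. pXN D x n > 0 \<longrightarrow> lo \<le> cmean D x n \<and> cmean D x n \<le> hi)"

definition same_obs :: "(bool \<times> real \<times> 'n) measure \<Rightarrow> (bool \<times> real \<times> 'n) measure \<Rightarrow> bool" where
  "same_obs D D' \<longleftrightarrow> (\<forall>n. pN D' n = pN D n \<and> XN D' n = XN D n \<and> YN D' n = YN D n)"

definition EN :: "(bool \<times> real \<times> 'n::finite) measure \<Rightarrow> (real \<Rightarrow> real \<Rightarrow> real) \<Rightarrow> real" where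
  "EN D f = (\<Sum>n\<in>UNIV. pN D n * f (XN D n) (YN D n))"

definition EXm :: "(bool \<times> real \<times> 'n::finite) measure \<Rightarrow> real" where
  "EXm D = EN D (\<lambda>a b. a)"

definition Y1_hi :: "real \<Rightarrow> real \<Rightarrow> (bool \<times> real \<times> 'n::finite) measure \<Rightarrow> real" where
  "Y1_hi lo hi D = EN D (\<lambda>a b. min (b - lo * (1 - a)) (hi * a)) / EXm D"
definition Y0_lo :: "real \<Rightarrow> real \<Rightarrow> (bool \<times> real \<times> 'n::finite) measure \<Rightarrow> real" where
  "Y0_lo lo hi D = EN D (\<lambda>a b. max (b - hi * a) (lo * (1 - a))) / (1 - EXm D)"
definition Y1_lo :: "real \<Rightarrow> real \<Rightarrow> (bool \<times> real \<times> 'n::finite) measure \<Rightarrow> real" where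
  "Y1_lo lo hi D = EN D (\<lambda>a b. max (b - hi * (1 - a)) (lo * a)) / EXm D"
definition Y0_hi :: "real \<Rightarrow> real \<Rightarrow> (bool \<times> real \<times> 'n::finite) measure \<Rightarrow> real" where
  "Y0_hi lo hi D = EN D (\<lambda>a b. min (b - lo * a) (hi * (1 - a))) / (1 - EXm D)"

end

theory Submission
  imports Defs
begin

text \<open>In the stratum N = n the data fix the cell probabilities Pr(X = x, N = n) and the sum
  I_1 + I_0 of the cell integrals I_x = E[Y; X = x, N = n], while the standing bound says
  lo Pr(X = x, N = n) \<le> I_x \<le> hi Pr(X = x, N = n). Eliminating I_(1-x) confines I_x to an
  interval; summing its endpoints over n and dividing by Pr(X = x) gives the MOB bounds on
  Y^x = (\<Sum>n. I_x) / Pr(X = x). Conversely, any admissible choice of cell integrals is realised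
  by replacing Y with the deterministic function I_x / Pr(X = x, N = n) of (X, N), and since Y^x
  is linear in the I_x, every value between the bounds is attained.\<close>

lemma space_joint_space [simp]: "space joint_space = UNIV"
  by (simp add: joint_space_def space_pair_measure)

lemma measurable_Xv: "Xv \<in> joint_space \<rightarrow>\<^sub>M count_space UNIV"
  unfolding joint_space_def Xv_def[abs_def] by simp

lemma measurable_Nv: "Nv \<in> joint_space \<rightarrow>\<^sub>M count_space UNIV"
  unfolding joint_space_def Nv_def[abs_def] by measurable

lemma borel_measurable_Yv: "Yv \<in> borel_measurable joint_space"
  unfolding joint_space_def Yv_def[abs_def] by measurable

lemma sets_X_N_event: "{w. Xv w = x \<and> Nv w = n} \<in> sets joint_space"
proof -
  have "{w. Xv w = x \<and> Nv w = n} = (Xv -` {x} \<inter> space joint_space) \<inter> (Nv -` {n} \<inter> space joint_space)"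
    by auto
  then show ?thesis
    using measurable_sets[OF measurable_Xv, of "{x}"] measurable_sets[OF measurable_Nv, of "{n}"]
    by auto
qed

lemma sets_X_event: "{w. Xv w = x} \<in> sets joint_space"
  using measurable_sets[OF measurable_Xv, of "{x}"] by (simp add: vimage_def)

definition cell_integral :: "(bool \<times> real \<times> 'n) measure \<Rightarrow> bool \<Rightarrow> 'n \<Rightarrow> real" where
  "cell_integral D x n = (\<integral>w. Yv w * indicator {w. Xv w = x \<and> Nv w = n} w \<partial>D)"

locale XYN_measure = prob_space D for D :: "(bool \<times> real \<times> 'n::finite) measure" +
  assumes sets_eq_joint_space: "sets D = sets joint_space"
    and integrable_Yv: "integrable D Yv"
begin

lemma space_eq_UNIV [simp]: "space D = UNIV"
  using sets_eq_imp_space_eq[OF sets_eq_joint_space] by simp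

lemma measurable_Xv_D: "Xv \<in> D \<rightarrow>\<^sub>M count_space UNIV"
  using measurable_Xv by (simp add: measurable_cong_sets[OF sets_eq_joint_space refl])

lemma measurable_Nv_D: "Nv \<in> D \<rightarrow>\<^sub>M count_space UNIV"
  using measurable_Nv by (simp add: measurable_cong_sets[OF sets_eq_joint_space refl])

lemma sets_X_N_event_D: "{w. Xv w = x \<and> Nv w = n} \<in> sets D"
  using sets_eq_joint_space sets_X_N_event by simp

lemma sets_X_event_D: "{w. Xv w = x} \<in> sets D"
  using sets_eq_joint_space sets_X_event by simp

lemma pN_eq_sum_pXN: "pN D n = pXN D True n + pXN D False n"
proof -
  have "{w \<in> space D. Nv w = n} = {w. Xv w = True \<and> Nv w = n} \<union> {w. Xv w = False \<and> Nv w = n}"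
    by auto
  then show ?thesis
    unfolding pN_def pXN_def
    using finite_measure_Union[OF sets_X_N_event_D sets_X_N_event_D, of True n False n] by auto
qed

lemma XN_eq: "XN D n = pXN D True n / pN D n"
  by (simp add: XN_def pXN_def)

lemma integral_N_event_eq_sum_cells:
  "(\<integral>w. Yv w * indicator {w. Nv w = n} w \<partial>D) = cell_integral D True n + cell_integral D False n"
proof -
  have "(\<lambda>w. Yv w * indicator {w. Nv w = n} w) =
      (\<lambda>w. Yv w * indicator {w. Xv w = True \<and> Nv w = n} w + Yv w * indicator {w. Xv w = False \<and> Nv w = n} w)"
    by (auto simp: indicator_def fun_eq_iff)
  then show ?thesis
    unfolding cell_integral_def
    using Bochner_Integration.integral_add[OF
        integrable_real_mult_indicator[OF sets_X_N_event_D[of True n] integrable_Yv]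
        integrable_real_mult_indicator[OF sets_X_N_event_D[of False n] integrable_Yv]]
    by simp
qed

lemma YN_eq: "YN D n = (cell_integral D True n + cell_integral D False n) / pN D n"
  by (simp add: YN_def integral_N_event_eq_sum_cells)

lemma measure_X_event_eq_sum: "measure D {w \<in> space D. Xv w = x} = (\<Sum>n\<in>UNIV. pXN D x n)"
proof -
  have "{w \<in> space D. Xv w = x} = (\<Union>n. {w. Xv w = x \<and> Nv w = n})"
    by auto
  then have "measure D {w \<in> space D. Xv w = x} = (\<Sum>n\<in>UNIV. measure D {w. Xv w = x \<and> Nv w = n})"
    by (simp only:) (intro finite_measure_finite_Union, auto simp: disjoint_family_on_def sets_X_N_event_D)
  then show ?thesis
    by (simp add: pXN_def)
qed

lemma sum_pXN_True_plus_False: "(\<Sum>n\<in>UNIV. pXN D True n) + (\<Sum>n\<in>UNIV. pXN D False n) = 1"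
proof -
  have "{w \<in> space D. Xv w = False} = space D - {w. Xv w = True}"
    by auto
  then have "measure D {w \<in> space D. Xv w = False} = 1 - measure D {w \<in> space D. Xv w = True}"
    using prob_compl[OF sets_X_event_D[of True]] by simp
  then show ?thesis
    using measure_X_event_eq_sum[of True] measure_X_event_eq_sum[of False] by simp
qed

lemma Ypar_eq: "Ypar D x = (\<Sum>n\<in>UNIV. cell_integral D x n) / (\<Sum>n\<in>UNIV. pXN D x n)"
proof -
  have "(\<Sum>n\<in>UNIV. Yv w * indicator {w. Xv w = x \<and> Nv w = n} w) = Yv w * indicator {w. Xv w = x} w"
    for w :: "bool \<times> real \<times> 'n"
  proof -
    have "(\<Sum>n\<in>UNIV. Yv w * indicator {w. Xv w = x \<and> Nv w = n} w)
        = (\<Sum>n\<in>UNIV. if Nv w = n then Yv w * indicator {w. Xv w = x} w else 0)"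
      by (rule sum.cong) (auto simp: indicator_def)
    then show ?thesis by simp
  qed
  then have "(\<integral>w. Yv w * indicator {w. Xv w = x} w \<partial>D)
      = (\<integral>w. (\<Sum>n\<in>UNIV. Yv w * indicator {w. Xv w = x \<and> Nv w = n} w) \<partial>D)"
    by (simp only:)
  also have "\<dots> = (\<Sum>n\<in>UNIV. cell_integral D x n)"
    unfolding cell_integral_def
    by (rule Bochner_Integration.integral_sum)
      (rule integrable_real_mult_indicator[OF sets_X_N_event_D integrable_Yv])
  finally show ?thesis
    unfolding Ypar_def measure_X_event_eq_sum by (simp only:)
qed

lemma pXN_nonneg: "0 \<le> pXN D x n"
  by (simp add: pXN_def)

lemma cell_integral_eq_0:
  assumes "pXN D x n = 0"
  shows "cell_integral D x n = 0"
proof -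
  have "{w. Xv w = x \<and> Nv w = n} \<in> null_sets D"
    using assms sets_X_N_event_D by (simp add: pXN_def null_sets_def emeasure_eq_measure)
  then have "AE w in D. Yv w * indicator {w. Xv w = x \<and> Nv w = n} w = 0"
    by (rule AE_not_in[THEN AE_mp]) (simp add: indicator_def)
  then show ?thesis
    unfolding cell_integral_def by (rule integral_eq_zero_AE)
qed

text \<open>Null cells escape the bound on cmean, but their integral is 0, so they satisfy the
  right-hand side anyway.\<close>
lemma joint_dist_iff_cell_bounds:
  "joint_dist lo hi D \<longleftrightarrow>
     (\<forall>x n. lo * pXN D x n \<le> cell_integral D x n \<and> cell_integral D x n \<le> hi * pXN D x n)"
proof -
  have "(0 < pXN D x n \<longrightarrow> lo \<le> cmean D x n \<and> cmean D x n \<le> hi) \<longleftrightarrow>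
      lo * pXN D x n \<le> cell_integral D x n \<and> cell_integral D x n \<le> hi * pXN D x n" for x n
  proof (cases "pXN D x n = 0")
    case True
    then show ?thesis by (simp add: cell_integral_eq_0)
  next
    case False
    then have "0 < pXN D x n" using pXN_nonneg[of x n] by linarith
    then show ?thesis
      by (simp add: cmean_def cell_integral_def[symmetric] pos_le_divide_eq pos_divide_le_eq mult.commute)
  qed
  then show ?thesis
    by (simp add: joint_dist_def prob_space_axioms sets_eq_joint_space integrable_Yv)
qed

end

lemma joint_dist_imp_XYN_measure: "joint_dist lo hi D \<Longrightarrow> XYN_measure D"
  by (simp add: joint_dist_def XYN_measure_def XYN_measure_axioms_def)

lemma same_obs_if_same_cells:
  assumes "XYN_measure D" "XYN_measure D'"
    and "\<And>x n. pXN D' x n = pXN D x n"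
    and "\<And>n. cell_integral D' True n + cell_integral D' False n
             = cell_integral D True n + cell_integral D False n"
  shows "same_obs D D'"
  using assms XYN_measure.pN_eq_sum_pXN[OF assms(1)] XYN_measure.pN_eq_sum_pXN[OF assms(2)]
    XYN_measure.XN_eq[OF assms(1)] XYN_measure.XN_eq[OF assms(2)]
    XYN_measure.YN_eq[OF assms(1)] XYN_measure.YN_eq[OF assms(2)]
  by (simp add: same_obs_def)

definition replace_Y :: "(bool \<Rightarrow> 'n \<Rightarrow> real) \<Rightarrow> bool \<times> real \<times> 'n \<Rightarrow> bool \<times> real \<times> 'n" where
  "replace_Y m w = (Xv w, m (Xv w) (Nv w), Nv w)"

lemma replace_Y_simps [simp]:
  "Xv (replace_Y m w) = Xv w" "Nv (replace_Y m w) = Nv w" "Yv (replace_Y m w) = m (Xv w) (Nv w)"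
  by (simp_all add: replace_Y_def Xv_def Nv_def Yv_def)

context XYN_measure
begin

lemma borel_measurable_cell_function: "(\<lambda>w. m (Xv w) (Nv w)) \<in> borel_measurable D"
  by (rule measurable_compose_countable[OF _ measurable_Xv_D],
      rule measurable_compose_countable[OF _ measurable_Nv_D]) simp

lemma measurable_replace_Y: "replace_Y m \<in> D \<rightarrow>\<^sub>M joint_space"
  unfolding joint_space_def replace_Y_def[abs_def]
  by (intro measurable_Pair measurable_Xv_D measurable_Nv_D borel_measurable_cell_function)

lemma integrable_cell_function:
  fixes m :: "bool \<Rightarrow> 'n \<Rightarrow> real"
  shows "integrable D (\<lambda>w. m (Xv w) (Nv w))"
proof (rule integrable_const_bound[where B="Max (range (\<lambda>(x, n). \<bar>m x n\<bar>))"])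
  show "AE w in D. norm (m (Xv w) (Nv w)) \<le> Max (range (\<lambda>(x, n). \<bar>m x n\<bar>))"
  proof (rule AE_I2)
    fix w
    have "\<bar>m (Xv w) (Nv w)\<bar> \<in> range (\<lambda>(x, n). \<bar>m x n\<bar>)"
      by (rule range_eqI[of _ _ "(Xv w, Nv w)"]) simp
    then show "norm (m (Xv w) (Nv w)) \<le> Max (range (\<lambda>(x, n). \<bar>m x n\<bar>))"
      by (simp add: Max_ge)
  qed
qed (rule borel_measurable_cell_function)

lemma XYN_measure_replace_Y: "XYN_measure (distr D joint_space (replace_Y m))"
  unfolding XYN_measure_def XYN_measure_axioms_def
  using prob_space_distr[OF measurable_replace_Y] integrable_cell_function
  by (simp add: integrable_distr_eq[OF measurable_replace_Y borel_measurable_Yv])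

lemma pXN_replace_Y: "pXN (distr D joint_space (replace_Y m)) x n = pXN D x n"
proof -
  have "replace_Y m -` {w. Xv w = x \<and> Nv w = n} = {w. Xv w = x \<and> Nv w = n}"
    by auto
  then show ?thesis
    unfolding pXN_def using measure_distr[OF measurable_replace_Y sets_X_N_event] by simp
qed

lemma cell_integral_replace_Y:
  "cell_integral (distr D joint_space (replace_Y m)) x n = m x n * pXN D x n"
proof -
  have "cell_integral (distr D joint_space (replace_Y m)) x n
      = (\<integral>w. m (Xv w) (Nv w) * indicator {w. Xv w = x \<and> Nv w = n} w \<partial>D)"
    unfolding cell_integral_def
    by (subst integral_distr[OF measurable_replace_Y])
      (use borel_measurable_Yv sets_X_N_event in measurable, simp add: indicator_def)
  also have "\<dots> = (\<integral>w. m x n * indicator {w. Xv w = x \<and> Nv w = n} w \<partial>D)"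
  proof (rule Bochner_Integration.integral_cong)
    show "m (Xv w) (Nv w) * indicator {w. Xv w = x \<and> Nv w = n} w
        = m x n * indicator {w. Xv w = x \<and> Nv w = n} w" for w
      by (cases "w \<in> {w. Xv w = x \<and> Nv w = n}") auto
  qed simp
  also have "\<dots> = m x n * pXN D x n"
    by (simp add: pXN_def)
  finally show ?thesis .
qed

end

lemma joint_dist_with_cell_integrals:
  fixes D :: "(bool \<times> real \<times> 'n::finite) measure"
  assumes D: "joint_dist lo hi D"
    and bounds: "\<And>x n. lo * pXN D x n \<le> J x n \<and> J x n \<le> hi * pXN D x n"
    and sums: "\<And>n. J True n + J False n = cell_integral D True n + cell_integral D False n"
  obtains D' where "joint_dist lo hi D'" "same_obs D D'"
    "\<And>x. Ypar D' x = (\<Sum>n\<in>UNIV. J x n) / (\<Sum>n\<in>UNIV. pXN D x n)"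
proof -
  interpret XYN_measure D
    using D by (rule joint_dist_imp_XYN_measure)
  \<comment> \<open>on a null cell J vanishes, so the junk value of J x n / 0 is harmless\<close>
  define D' where "D' = distr D joint_space (replace_Y (\<lambda>x n. J x n / pXN D x n))"
  interpret D': XYN_measure D'
    unfolding D'_def by (rule XYN_measure_replace_Y)
  have pXN': "pXN D' x n = pXN D x n" for x n
    unfolding D'_def by (rule pXN_replace_Y)
  have cells': "cell_integral D' x n = J x n" for x n
    using bounds[of x n] by (cases "pXN D x n = 0") (simp_all add: D'_def cell_integral_replace_Y)
  show thesis
  proof
    show "joint_dist lo hi D'"
      using bounds by (simp add: D'.joint_dist_iff_cell_bounds pXN' cells')
    show "same_obs D D'"
      by (rule same_obs_if_same_cells) (unfold_locales, simp_all add: pXN' cells' sums)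
    show "Ypar D' x = (\<Sum>n\<in>UNIV. J x n) / (\<Sum>n\<in>UNIV. pXN D x n)" for x
      by (simp add: D'.Ypar_eq pXN' cells')
  qed
qed

lemma sum_attains_intermediate_value:
  fixes l u :: "'a \<Rightarrow> real"
  assumes "\<And>n. n \<in> S \<Longrightarrow> l n \<le> u n" and "sum l S \<le> v" "v \<le> sum u S"
  obtains j where "\<And>n. n \<in> S \<Longrightarrow> l n \<le> j n \<and> j n \<le> u n" "sum j S = v"
proof
  define t where "t = (if sum u S = sum l S then 0 else (v - sum l S) / (sum u S - sum l S))"
  have t: "0 \<le> t" "t \<le> 1" "sum l S + t * (sum u S - sum l S) = v"
    using assms(2,3) by (auto simp: t_def field_simps)
  show "l n \<le> l n + t * (u n - l n) \<and> l n + t * (u n - l n) \<le> u n" if "n \<in> S" for n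
    using assms(1)[OF that] t(1,2) mult_left_le_one_le[of "u n - l n" t] by auto
  show "(\<Sum>n\<in>S. l n + t * (u n - l n)) = v"
    using t(3) by (simp add: sum.distrib sum_subtractf flip: sum_distrib_left)
qed

lemma cell_pair_bounds_iff:
  fixes lo hi p q s j :: real
  shows "(lo * p \<le> j \<and> j \<le> hi * p \<and> lo * q \<le> s - j \<and> s - j \<le> hi * q) \<longleftrightarrow>
    max (s - hi * q) (lo * p) \<le> j \<and> j \<le> min (s - lo * q) (hi * p)"
  by auto

definition Ypar_lo :: "real \<Rightarrow> real \<Rightarrow> (bool \<times> real \<times> 'n::finite) measure \<Rightarrow> bool \<Rightarrow> real" where
  "Ypar_lo lo hi D x =
     (\<Sum>n\<in>UNIV. max (cell_integral D True n + cell_integral D False n - hi * pXN D (\<not> x) n) (lo * pXN D x n))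
     / (\<Sum>n\<in>UNIV. pXN D x n)"

definition Ypar_hi :: "real \<Rightarrow> real \<Rightarrow> (bool \<times> real \<times> 'n::finite) measure \<Rightarrow> bool \<Rightarrow> real" where
  "Ypar_hi lo hi D x =
     (\<Sum>n\<in>UNIV. min (cell_integral D True n + cell_integral D False n - lo * pXN D (\<not> x) n) (hi * pXN D x n))
     / (\<Sum>n\<in>UNIV. pXN D x n)"

lemma cell_integral_True_plus_False: "cell_integral D True n + cell_integral D False n
    = cell_integral D x n + cell_integral D (\<not> x) n"
  by (cases x) simp_all

lemma Ypar_in_bounds:
  assumes D: "joint_dist lo hi D"
  shows "Ypar D x \<in> {Ypar_lo lo hi D x .. Ypar_hi lo hi D x}"
proof -
  interpret XYN_measure D
    using D by (rule joint_dist_imp_XYN_measure)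
  let ?s = "\<lambda>n. cell_integral D True n + cell_integral D False n"
  have "max (?s n - hi * pXN D (\<not> x) n) (lo * pXN D x n) \<le> cell_integral D x n
      \<and> cell_integral D x n \<le> min (?s n - lo * pXN D (\<not> x) n) (hi * pXN D x n)" for n
    using D unfolding joint_dist_iff_cell_bounds cell_integral_True_plus_False[of D n x]
    by (subst cell_pair_bounds_iff[symmetric]) simp
  then show ?thesis
    unfolding Ypar_eq Ypar_lo_def Ypar_hi_def
    by (auto intro!: divide_right_mono sum_mono sum_nonneg pXN_nonneg)
qed

lemma Ypar_bounds_attained:
  assumes D: "joint_dist lo hi D" and v: "v \<in> {Ypar_lo lo hi D x .. Ypar_hi lo hi D x}"
  shows "\<exists>D'. joint_dist lo hi D' \<and> same_obs D D' \<and> Ypar D' x = v"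
proof -
  interpret XYN_measure D
    using D by (rule joint_dist_imp_XYN_measure)
  let ?P = "\<Sum>n\<in>UNIV. pXN D x n"
  let ?s = "\<lambda>n. cell_integral D True n + cell_integral D False n"
  let ?l = "\<lambda>n. max (?s n - hi * pXN D (\<not> x) n) (lo * pXN D x n)"
  let ?u = "\<lambda>n. min (?s n - lo * pXN D (\<not> x) n) (hi * pXN D x n)"
  show ?thesis
  proof (cases "?P = 0")
    case True
    then have "v = Ypar D x"
      using v by (simp add: Ypar_lo_def Ypar_hi_def Ypar_eq)
    then show ?thesis
      using D by (auto simp: same_obs_def)
  next
    case False
    then have P: "0 < ?P"
      using sum_nonneg[of UNIV "pXN D x"] pXN_nonneg by fastforce
    have cells: "lo * pXN D y n \<le> cell_integral D y n \<and> cell_integral D y n \<le> hi * pXN D y n" for y n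
      using D joint_dist_iff_cell_bounds by blast
    have "?l n \<le> ?u n" for n
      using cells[of x n] cells[of "\<not> x" n] cell_integral_True_plus_False[of D n x] by auto
    moreover have "sum ?l UNIV \<le> v * ?P" "v * ?P \<le> sum ?u UNIV"
      using v P by (simp_all add: Ypar_lo_def Ypar_hi_def field_simps)
    ultimately obtain j where j: "\<And>n. ?l n \<le> j n \<and> j n \<le> ?u n" and sum_j: "sum j UNIV = v * ?P"
      by (rule sum_attains_intermediate_value) blast+
    define J where "J y n = (if y = x then j n else ?s n - j n)" for y n
    have "lo * pXN D y n \<le> J y n \<and> J y n \<le> hi * pXN D y n" for y n
      using j[of n] cell_pair_bounds_iff[of lo "pXN D x n" "j n" hi "pXN D (\<not> x) n" "?s n"]
      by (cases "y = x") (auto simp: J_def)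
    moreover have "J True n + J False n = ?s n" for n
      by (cases x) (simp_all add: J_def)
    ultimately obtain D' where "joint_dist lo hi D'" "same_obs D D'"
        "Ypar D' x = (\<Sum>n\<in>UNIV. J x n) / ?P"
      by (metis joint_dist_with_cell_integrals[OF D])
    moreover have "(\<Sum>n\<in>UNIV. J x n) / ?P = v"
      using sum_j P by (simp add: J_def)
    ultimately show ?thesis
      by auto
  qed
qed

lemma mult_stratum_coordinates:
  fixes a b s c y :: real
  assumes "0 < a + b"
  shows "1 - a / (a + b) = b / (a + b)"
    and "(a + b) * (s / (a + b) - c * y / (a + b)) = s - c * y"
    and "(a + b) * (c * y / (a + b)) = c * y"
  using assms by (simp_all add: field_simps flip: diff_divide_distrib)

context XYN_measure
begin

lemma EN_eq_sum_cells:
  assumes "\<And>a b s. 0 < a + b \<Longrightarrow> (a + b) * f (a / (a + b)) (s / (a + b)) = G a b s"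
    and "G 0 0 0 = 0"
  shows "EN D f = (\<Sum>n\<in>UNIV. G (pXN D True n) (pXN D False n)
                               (cell_integral D True n + cell_integral D False n))"
  unfolding EN_def
proof (rule sum.cong[OF refl])
  fix n
  show "pN D n * f (XN D n) (YN D n)
      = G (pXN D True n) (pXN D False n) (cell_integral D True n + cell_integral D False n)"
  proof (cases "pN D n = 0")
    case True
    then have "pXN D True n = 0" "pXN D False n = 0"
      using pN_eq_sum_pXN[of n] pXN_nonneg[of True n] pXN_nonneg[of False n] by linarith+
    then show ?thesis
      using True assms(2) by (simp add: cell_integral_eq_0)
  next
    case False
    then have "0 < pXN D True n + pXN D False n"
      using pN_eq_sum_pXN[of n] pXN_nonneg[of True n] pXN_nonneg[of False n] by linarith
    then show ?thesis
      using assms(1) by (simp add: XN_eq YN_eq pN_eq_sum_pXN)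
  qed
qed

lemma EXm_eq: "EXm D = (\<Sum>n\<in>UNIV. pXN D True n)"
  unfolding EXm_def by (subst EN_eq_sum_cells[where G="\<lambda>a b s. a"]) simp_all

lemma one_minus_EXm_eq: "1 - EXm D = (\<Sum>n\<in>UNIV. pXN D False n)"
  using sum_pXN_True_plus_False by (simp add: EXm_eq)

lemma Y1_lo_eq: "Y1_lo lo hi D = Ypar_lo lo hi D True"
  unfolding Y1_lo_def Ypar_lo_def EXm_eq
  by (subst EN_eq_sum_cells[where G="\<lambda>a b s. max (s - hi * b) (lo * a)"])
    (simp_all add: max_mult_distrib_left mult_stratum_coordinates)

lemma Y1_hi_eq: "Y1_hi lo hi D = Ypar_hi lo hi D True"
  unfolding Y1_hi_def Ypar_hi_def EXm_eq
  by (subst EN_eq_sum_cells[where G="\<lambda>a b s. min (s - lo * b) (hi * a)"])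
    (simp_all add: min_mult_distrib_left mult_stratum_coordinates)

lemma Y0_lo_eq: "Y0_lo lo hi D = Ypar_lo lo hi D False"
  unfolding Y0_lo_def Ypar_lo_def one_minus_EXm_eq
  by (subst EN_eq_sum_cells[where G="\<lambda>a b s. max (s - hi * a) (lo * b)"])
    (simp_all add: max_mult_distrib_left mult_stratum_coordinates)

lemma Y0_hi_eq: "Y0_hi lo hi D = Ypar_hi lo hi D False"
  unfolding Y0_hi_def Ypar_hi_def one_minus_EXm_eq
  by (subst EN_eq_sum_cells[where G="\<lambda>a b s. min (s - lo * a) (hi * b)"])
    (simp_all add: min_mult_distrib_left mult_stratum_coordinates)

end

theorem proposition2:
  fixes D :: "(bool \<times> real \<times> 'n::finite) measure" and lo hi :: real
  assumes "lo \<le> hi"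
    and "joint_dist lo hi D"
    and "\<exists>n. pN D n > 0 \<and> 0 < XN D n \<and> XN D n < 1"
  shows "Ypar D True \<in> {Y1_lo lo hi D .. Y1_hi lo hi D}
       \<and> (\<forall>v \<in> {Y1_lo lo hi D .. Y1_hi lo hi D}.
            \<exists>D' :: (bool \<times> real \<times> 'n) measure.
              joint_dist lo hi D' \<and> same_obs D D' \<and> Ypar D' True = v)
       \<and> Ypar D False \<in> {Y0_lo lo hi D .. Y0_hi lo hi D}
       \<and> (\<forall>v \<in> {Y0_lo lo hi D .. Y0_hi lo hi D}.
            \<exists>D' :: (bool \<times> real \<times> 'n) measure.
              joint_dist lo hi D' \<and> same_obs D D' \<and> Ypar D' False = v)"
proof -
  interpret XYN_measure D
    using assms(2) by (rule joint_dist_imp_XYN_measure)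
  show ?thesis
    unfolding Y1_lo_eq Y1_hi_eq Y0_lo_eq Y0_hi_eq
    using Ypar_in_bounds[OF assms(2)] Ypar_bounds_attained[OF assms(2)] by blast
qed

end
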